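(* Let $\mathcal{W}$, $\sigma$, $m$, $\mathcal{L}_m=\{\mathbb{R}^d;g_i;p_i:i\in\{1,\dots,N\}^m\}$, $S_i$ and $\mu_m^*$ be as follows: $\mathcal{W}=\{\mathbb{R}^d;f_1,\dots,f_N;p_1,\dots,p_N\}$ is a weighted IFS with all $p_i>0$, $\sum p_i=1$, $s_i\|x-y\|\le\|f_i(x)-f_i(y)\|\le c_i\|x-y\|$ with $0<s_i\le c_i<1$, satisfying the strong open set condition with open set $U$; $\sigma\in\{1,\dots,N\}^*$ is a word with $f_\sigma(A_\mathcal{W})\subset U$; $g_i=f_i\circ f_\sigma$, $S_i=s_is_\sigma$ for $i\in\{1,\dots,N\}^m$; and $\mu_m^*$ is the invariant measure of $\mathcal{L}_m$. For $r\in(0,\infty)$ let $k_{m,r}\in(0,\infty)$ be the unique number with $\sum_{i\in\{1,\dots,N\}^m}(p_iS_i^r)^{\frac{k_{m,r}}{r+k_{m,r}}}=1$. Then for every $l_0\in(0,k_{m,r})$, $$\liminf_{n\to\infty}n\cdot e_{n,r}(\mu_m^* )^{l_0}>0,$$ and consequently $k_{m,r}\le\underline{D}_r(\mu_m^* )$.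
   Context: For a word $\tau=\tau_1\cdots\tau_k$: $f_\tau=f_{\tau_1}\circ\cdots\circ f_{\tau_k}$, $p_\tau=\prod p_{\tau_j}$, $s_\tau=\prod s_{\tau_j}$. $A_\mathcal{W}$ is the attractor of $\mathcal{W}$ (unique nonempty compact set with $A_\mathcal{W}=\bigcup f_i(A_\mathcal{W})$). SOSC: nonempty open $U$ with $f_i(U)\subset U$, $f_i(U)\cap f_j(U)=\emptyset$ for $i\ne j$, $U\cap A_\mathcal{W}\ne\emptyset$. Invariant measure of a weighted IFS $\{\theta_k;w_k\}$: unique Borel probability $\nu$ with $\nu=\sum_kw_k\nu\circ\theta_k^{-1}$. $V_{n,r}(\nu)=\inf\{\int\min_{a\in A}\|x-a\|^rd\nu(x):\operatorname{card}(A)\le n\}$, $e_{n,r}=V_{n,r}^{1/r}$, $\underline{D}_r(\nu)=\liminf_{n\to\infty}\frac{\log n}{-\log e_{n,r}(\nu)}$. *)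

theory Defs
  imports "HOL-Analysis.Analysis" "HOL-Probability.Probability"
begin

definition word_map :: "(nat \<Rightarrow> 'a \<Rightarrow> 'a) \<Rightarrow> nat list \<Rightarrow> 'a \<Rightarrow> 'a" where
  "word_map f \<tau> = foldr (\<lambda>i g. f i \<circ> g) \<tau> id"

definition word_prod :: "(nat \<Rightarrow> real) \<Rightarrow> nat list \<Rightarrow> real" where
  "word_prod p \<tau> = prod_list (map p \<tau>)"

definition words :: "nat \<Rightarrow> nat \<Rightarrow> nat list set" where
  "words N m = {w. length w = m \<and> set w \<subseteq> {1..N}}"

definition is_attractor :: "'i set \<Rightarrow> ('i \<Rightarrow> 'a::metric_space \<Rightarrow> 'a) \<Rightarrow> 'a set \<Rightarrow> bool" where
  "is_attractor I f K \<longleftrightarrow> compact K \<and> K \<noteq> {} \<and> K = (\<Union>i\<in>I. f i ` K)"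

definition SOSC_with :: "'i set \<Rightarrow> ('i \<Rightarrow> 'a::topological_space \<Rightarrow> 'a) \<Rightarrow> 'a set \<Rightarrow> 'a set \<Rightarrow> bool" where
  "SOSC_with I f A U \<longleftrightarrow> open U \<and> U \<noteq> {} \<and> (\<forall>i\<in>I. f i ` U \<subseteq> U)
     \<and> (\<forall>i\<in>I. \<forall>j\<in>I. i \<noteq> j \<longrightarrow> f i ` U \<inter> f j ` U = {}) \<and> U \<inter> A \<noteq> {}"

definition is_invariant_measure ::
  "'i set \<Rightarrow> ('i \<Rightarrow> 'a::topological_space \<Rightarrow> 'a) \<Rightarrow> ('i \<Rightarrow> real) \<Rightarrow> 'a measure \<Rightarrow> bool" where
  "is_invariant_measure I \<theta> w \<nu> \<longleftrightarrow> prob_space \<nu> \<and> sets \<nu> = sets borel \<and>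
     (\<forall>B\<in>sets borel. emeasure \<nu> B = (\<Sum>k\<in>I. ennreal (w k) * emeasure \<nu> (\<theta> k -` B)))"

definition quant_V :: "nat \<Rightarrow> real \<Rightarrow> 'a::real_normed_vector measure \<Rightarrow> ennreal" where
  "quant_V n r \<nu> = (INF A\<in>{A. finite A \<and> A \<noteq> {} \<and> card A \<le> n}.
      \<integral>\<^sup>+ x. ennreal (Min ((\<lambda>a. norm (x - a) powr r) ` A)) \<partial>\<nu>)"

definition quant_e :: "nat \<Rightarrow> real \<Rightarrow> 'a::real_normed_vector measure \<Rightarrow> real" where
  "quant_e n r \<nu> = enn2real (quant_V n r \<nu>) powr (1 / r)"

definition lower_quant_dim :: "real \<Rightarrow> 'a::real_normed_vector measure \<Rightarrow> ereal" where
  "lower_quant_dim r \<nu> = liminf (\<lambda>n. ereal (ln (real n) / (- ln (quant_e n r \<nu>))))"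

end

theory Submission
  imports Defs
begin

text \<open>
  The maps \<open>g\<^sub>w = f\<^sub>w \<circ> f\<^sub>\<sigma>\<close>, \<open>w \<in> {1..N}\<^sup>m\<close>, send the attractor \<open>A\<close> into itself, and the
  strong open set condition together with \<open>f\<^sub>\<sigma>(A) \<subseteq> U\<close> makes the pieces \<open>g\<^sub>w(A)\<close> pairwise
  disjoint, hence \<open>\<delta>\<close>-separated; the invariant measure \<open>\<mu>\<close> is concentrated on \<open>A\<close>.
  For a finite set \<open>\<alpha>\<close>, split \<open>\<integral> d(x,\<alpha>)\<^sup>r d\<mu>\<close> along \<open>\<mu> = \<Sum> p\<^sub>w \<mu> \<circ> g\<^sub>w\<^sup>-\<^sup>1\<close> and recurse into
  the cylinders \<open>g\<^sub>\<tau>(A)\<close>: a point of \<open>\<alpha>\<close> is near at most one subcylinder, and a subcylinder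
  that receives no point contributes a fixed multiple of its scale to the power \<open>r\<close>.
  Induction on the number of points, with Jensen's inequality for \<open>x \<mapsto> x\<^sup>-\<^sup>r\<^sup>/\<^sup>k\<close> and the
  weights \<open>(p\<^sub>w S\<^sub>w\<^sup>r)\<^bsup>k/(r+k)\<^esup>\<close>, gives \<open>\<integral> d(x,\<alpha>)\<^sup>r d\<mu> \<ge> C card(\<alpha>)\<^sup>-\<^sup>r\<^sup>/\<^sup>k\<close>, that is
  \<open>e\<^sub>n\<^sub>,\<^sub>r(\<mu>) \<ge> c n\<^sup>-\<^sup>1\<^sup>/\<^sup>k\<close>; both claims follow from this bound and \<open>e\<^sub>n\<^sub>,\<^sub>r(\<mu>) < 1\<close>
  for large \<open>n\<close>.
\<close>

section \<open>Words\<close>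

lemma word_map_Nil [simp]: "word_map f [] = id"
  by (simp add: word_map_def)

lemma word_map_Cons [simp]: "word_map f (i # u) = f i \<circ> word_map f u"
  by (simp add: word_map_def)

lemma word_map_append: "word_map f (u @ v) = word_map f u \<circ> word_map f v"
  by (induction u) auto

lemma word_prod_Nil [simp]: "word_prod p [] = 1"
  by (simp add: word_prod_def)

lemma word_prod_Cons [simp]: "word_prod p (i # u) = p i * word_prod p u"
  by (simp add: word_prod_def)

lemma word_prod_append: "word_prod p (u @ v) = word_prod p u * word_prod p v"
  by (induction u) auto

lemma word_prod_pos: "(\<And>i. i \<in> set u \<Longrightarrow> 0 < p i) \<Longrightarrow> 0 < word_prod p u"
  by (induction u) auto

lemma word_prod_less_1:
  assumes "\<And>i. i \<in> set u \<Longrightarrow> 0 < p i \<and> p i < 1" and "u \<noteq> []"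
  shows "word_prod p u < 1"
  using assms
proof (induction u)
  case (Cons i u)
  have "word_prod p u \<le> 1"
    using Cons by (cases "u = []") auto
  then have "p i * word_prod p u \<le> p i"
    using Cons.prems(1)[of i] by (simp add: mult_left_le)
  moreover have "p i < 1"
    using Cons.prems(1)[of i] by simp
  ultimately show ?case
    by simp
qed simp

lemma dist_word_map_ge:
  assumes "\<And>i x y. i \<in> set u \<Longrightarrow> s i * dist x y \<le> dist (f i x) (f i y)"
    and "\<And>i. i \<in> set u \<Longrightarrow> 0 \<le> s i"
  shows "word_prod s u * dist x y \<le> dist (word_map f u x) (word_map f u y)"
  using assms
proof (induction u arbitrary: x y)
  case (Cons i u)
  have "word_prod s (i # u) * dist x y \<le> s i * dist (word_map f u x) (word_map f u y)"
    using Cons by (simp add: mult.assoc mult_left_mono)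
  also have "\<dots> \<le> dist (word_map f (i # u) x) (word_map f (i # u) y)"
    using Cons.prems(1)[of i] by simp
  finally show ?case .
qed simp

lemma dist_word_map_le:
  assumes "\<And>i x y. i \<in> set u \<Longrightarrow> dist (f i x) (f i y) \<le> c i * dist x y"
    and "\<And>i. i \<in> set u \<Longrightarrow> 0 \<le> c i"
  shows "dist (word_map f u x) (word_map f u y) \<le> word_prod c u * dist x y"
  using assms
proof (induction u arbitrary: x y)
  case (Cons i u)
  have "dist (word_map f (i # u) x) (word_map f (i # u) y) \<le> c i * dist (word_map f u x) (word_map f u y)"
    using Cons.prems(1)[of i] by simp
  also have "\<dots> \<le> word_prod c (i # u) * dist x y"
    using Cons by (simp add: mult.assoc mult_left_mono)
  finally show ?case .
qed simp

lemma word_map_image_subset: "(\<And>i. i \<in> set u \<Longrightarrow> f i ` X \<subseteq> X) \<Longrightarrow> word_map f u ` X \<subseteq> X"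
  by (induction u) (auto simp: image_subset_iff)

lemma word_map_images_disjoint:
  assumes inj: "\<And>i. i \<in> I \<Longrightarrow> inj (f i)"
    and into: "\<And>i. i \<in> I \<Longrightarrow> f i ` U \<subseteq> U"
    and disjoint: "\<And>i j. i \<in> I \<Longrightarrow> j \<in> I \<Longrightarrow> i \<noteq> j \<Longrightarrow> f i ` U \<inter> f j ` U = {}"
  shows "set u \<subseteq> I \<Longrightarrow> set v \<subseteq> I \<Longrightarrow> length u = length v \<Longrightarrow> u \<noteq> v \<Longrightarrow>
    word_map f u ` U \<inter> word_map f v ` U = {}"
proof (induction u arbitrary: v)
  case (Cons i u)
  then obtain j v' where v: "v = j # v'"
    by (cases v) auto
  have "word_map f u ` U \<subseteq> U" "word_map f v' ` U \<subseteq> U"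
    using Cons.prems v into by (auto intro!: word_map_image_subset)
  show ?case
  proof (cases "i = j")
    case True
    then have "word_map f u ` U \<inter> word_map f v' ` U = {}"
      using Cons v by auto
    then show ?thesis
      using True v inj[of i] Cons.prems(1) by (auto simp: inj_def)
  next
    case False
    have "word_map f (i # u) ` U \<subseteq> f i ` U" "word_map f v ` U \<subseteq> f j ` U"
      using \<open>word_map f u ` U \<subseteq> U\<close> \<open>word_map f v' ` U \<subseteq> U\<close> v by (auto simp: image_comp[symmetric])
    then show ?thesis
      using disjoint[of i j] False Cons.prems(1,2) v by auto
  qed
qed simp

lemma finite_words: "finite (words N m)"
  using finite_lists_length_eq[of "{1..N}" m] by (simp add: words_def conj_commute)

section \<open>Self-similar measures\<close>

lemma nn_integral_invariant_sum:
  fixes \<mu> :: "'a measure" and g :: "'i \<Rightarrow> 'a \<Rightarrow> 'a" and w :: "'i \<Rightarrow> real"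
  assumes g: "\<And>i. i \<in> I \<Longrightarrow> g i \<in> \<mu> \<rightarrow>\<^sub>M \<mu>"
    and invariant: "\<And>B. B \<in> sets \<mu> \<Longrightarrow>
      emeasure \<mu> B = (\<Sum>i\<in>I. ennreal (w i) * emeasure \<mu> (g i -` B \<inter> space \<mu>))"
    and u: "u \<in> borel_measurable \<mu>"
  shows "(\<integral>\<^sup>+x. u x \<partial>\<mu>) = (\<Sum>i\<in>I. ennreal (w i) * (\<integral>\<^sup>+x. u (g i x) \<partial>\<mu>))"
  using u
proof (induction rule: borel_measurable_induct)
  case (cong u v)
  have "(\<integral>\<^sup>+x. u (g i x) \<partial>\<mu>) = (\<integral>\<^sup>+x. v (g i x) \<partial>\<mu>)" if "i \<in> I" for i
    using cong g[OF that] by (intro nn_integral_cong) (auto simp: measurable_space)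
  then show ?case
    using cong by (simp cong: nn_integral_cong sum.cong)
next
  case (set B)
  have "(\<integral>\<^sup>+x. indicator B (g i x) \<partial>\<mu>) = emeasure \<mu> (g i -` B \<inter> space \<mu>)" if "i \<in> I" for i
    using measurable_sets[OF g[OF that] set]
    by (subst nn_integral_cong[where v="indicator (g i -` B \<inter> space \<mu>)"])
      (auto split: split_indicator)
  then show ?case
    using set invariant[OF set] by (simp cong: sum.cong)
next
  case (mult u c)
  have "(\<integral>\<^sup>+x. c * u (g i x) \<partial>\<mu>) = c * (\<integral>\<^sup>+x. u (g i x) \<partial>\<mu>)" if "i \<in> I" for i
    using measurable_comp[OF g[OF that] mult(2)] by (simp add: nn_integral_cmult o_def)
  then show ?case
    using mult by (simp add: nn_integral_cmult sum_distrib_left mult.left_commute cong: sum.cong)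
next
  case (add u v)
  have "(\<integral>\<^sup>+x. v (g i x) + u (g i x) \<partial>\<mu>) = (\<integral>\<^sup>+x. v (g i x) \<partial>\<mu>) + (\<integral>\<^sup>+x. u (g i x) \<partial>\<mu>)"
    if "i \<in> I" for i
    using measurable_comp[OF g[OF that] \<open>u \<in> borel_measurable \<mu>\<close>]
      measurable_comp[OF g[OF that] \<open>v \<in> borel_measurable \<mu>\<close>]
    by (simp add: nn_integral_add o_def)
  then show ?case
    using add by (simp add: nn_integral_add sum.distrib distrib_left cong: sum.cong)
next
  case (seq U)
  have mono_comp: "incseq (\<lambda>j x. U j (g i x))" for i
    using \<open>incseq U\<close> by (auto simp: incseq_def le_fun_def)
  have SUP_comp: "(\<integral>\<^sup>+x. (SUP j. U j) (g i x) \<partial>\<mu>) = (SUP j. \<integral>\<^sup>+x. U j (g i x) \<partial>\<mu>)"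
    if "i \<in> I" for i
    unfolding SUP_apply
    using mono_comp[of i] measurable_comp[OF g[OF that] \<open>U _ \<in> borel_measurable \<mu>\<close>]
    by (intro nn_integral_monotone_convergence_SUP) (auto simp: o_def)
  have "(\<integral>\<^sup>+x. (SUP j. U j) x \<partial>\<mu>) = (SUP j. \<Sum>i\<in>I. ennreal (w i) * (\<integral>\<^sup>+x. U j (g i x) \<partial>\<mu>))"
    unfolding SUP_apply using seq by (simp add: nn_integral_monotone_convergence_SUP)
  also have "\<dots> = (\<Sum>i\<in>I. SUP j. ennreal (w i) * (\<integral>\<^sup>+x. U j (g i x) \<partial>\<mu>))"
    using mono_comp
    by (intro ennreal_SUP_sum) (auto simp: incseq_def le_fun_def intro!: mult_left_mono nn_integral_mono)
  also have "\<dots> = (\<Sum>i\<in>I. ennreal (w i) * (\<integral>\<^sup>+x. (SUP j. U j) (g i x) \<partial>\<mu>))"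
    by (intro sum.cong refl) (simp only: SUP_comp SUP_mult_left_ennreal)
  finally show ?case .
qed

lemma invariant_weights_sum:
  assumes "prob_space \<mu>" and "sets \<mu> = sets borel"
    and "\<And>B. B \<in> sets borel \<Longrightarrow> emeasure \<mu> B = (\<Sum>i\<in>W. ennreal (P i) * emeasure \<mu> (g i -` B))"
  shows "(\<Sum>i\<in>W. ennreal (P i)) = 1"
proof -
  have "space \<mu> = UNIV"
    using sets_eq_imp_space_eq[OF assms(2)] by simp
  then show ?thesis
    using assms(3)[of UNIV] prob_space.emeasure_space_1[OF assms(1)] by simp
qed

lemma emeasure_infdist_gt_le:
  fixes \<mu> :: "'a::heine_borel measure"
  assumes prob: "prob_space \<mu>" and sets: "sets \<mu> = sets borel"
    and invariant: "\<And>B. B \<in> sets borel \<Longrightarrow> emeasure \<mu> B = (\<Sum>i\<in>W. ennreal (P i) * emeasure \<mu> (g i -` B))"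
    and A: "closed A" "A \<noteq> {}" and g_A: "\<And>i. i \<in> W \<Longrightarrow> g i ` A \<subseteq> A"
    and L: "0 < L" and lipschitz: "\<And>i x y. i \<in> W \<Longrightarrow> dist (g i x) (g i y) \<le> L * dist x y"
  shows "emeasure \<mu> {x. t < infdist x A} \<le> emeasure \<mu> {x. t / L < infdist x A}"
proof -
  have measurable: "{x. u < infdist x A} \<in> sets borel" for u
    by (intro borel_open open_Collect_less continuous_intros)
  have preimage: "g i -` {x. t < infdist x A} \<subseteq> {x. t / L < infdist x A}" if "i \<in> W" for i
  proof
    fix x assume "x \<in> g i -` {x. t < infdist x A}"
    moreover obtain a where "a \<in> A" "infdist x A = dist x a"
      using infdist_attains_inf[OF A] by metis
    moreover have "infdist (g i x) A \<le> dist (g i x) (g i a)"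
      using g_A[OF that] \<open>a \<in> A\<close> by (intro infdist_le) auto
    ultimately have "t < L * infdist x A"
      using lipschitz[OF that, of x a] by simp
    then show "x \<in> {x. t / L < infdist x A}"
      using L by (simp add: field_simps)
  qed
  have "emeasure \<mu> {x. t < infdist x A} = (\<Sum>i\<in>W. ennreal (P i) * emeasure \<mu> (g i -` {x. t < infdist x A}))"
    by (rule invariant[OF measurable])
  also have "\<dots> \<le> (\<Sum>i\<in>W. ennreal (P i) * emeasure \<mu> {x. t / L < infdist x A})"
    using preimage sets measurable by (intro sum_mono mult_left_mono emeasure_mono) auto
  also have "\<dots> = emeasure \<mu> {x. t / L < infdist x A}"
    using invariant_weights_sum[OF prob sets invariant] by (simp add: sum_distrib_right[symmetric])
  finally show ?thesis .
qed

lemma AE_in_invariant_compact: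
  fixes \<mu> :: "'a::heine_borel measure"
  assumes prob: "prob_space \<mu>" and sets: "sets \<mu> = sets borel"
    and invariant: "\<And>B. B \<in> sets borel \<Longrightarrow> emeasure \<mu> B = (\<Sum>i\<in>W. ennreal (P i) * emeasure \<mu> (g i -` B))"
    and A: "compact A" "A \<noteq> {}" and g_A: "\<And>i. i \<in> W \<Longrightarrow> g i ` A \<subseteq> A"
    and L: "0 < L" "L < 1" and lipschitz: "\<And>i x y. i \<in> W \<Longrightarrow> dist (g i x) (g i y) \<le> L * dist x y"
  shows "AE x in \<mu>. x \<in> A"
proof -
  interpret prob_space \<mu> by (rule prob)
  define far where "far u = {x. u < infdist x A}" for u
  \<comment> \<open>\<open>\<mu> (far t) \<le> \<mu> (far (t / L ^ n))\<close>, and the right-hand side tends to \<open>\<mu> {} = 0\<close>\<close>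
  have far_sets: "far u \<in> sets \<mu>" for u
    unfolding far_def sets by (intro borel_open open_Collect_less continuous_intros)
  have far_iterate: "measure \<mu> (far t) \<le> measure \<mu> (far (t / L ^ n))" for t n
  proof (induction n)
    case (Suc n)
    have "emeasure \<mu> (far (t / L ^ n)) \<le> emeasure \<mu> (far (t / L ^ n / L))"
      unfolding far_def
      by (rule emeasure_infdist_gt_le[OF prob sets invariant compact_imp_closed[OF A(1)] A(2) g_A L(1) lipschitz])
    with Suc show ?case
      by (simp add: emeasure_eq_measure mult.commute)
  qed simp
  have far_null: "measure \<mu> (far t) = 0" if "0 < t" for t
  proof -
    have "t / L ^ m \<le> t / L ^ n" if "m \<le> n" for m n
      using \<open>0 < t\<close> L \<open>m \<le> n\<close> by (intro divide_left_mono power_decreasing) auto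
    then have "decseq (\<lambda>n. far (t / L ^ n))"
      unfolding decseq_def far_def by force
    moreover have "(\<Inter>n. far (t / L ^ n)) = {}"
    proof -
      have "\<exists>n. infdist x A < t / L ^ n" for x
        using real_arch_pow[of "1 / L" "infdist x A / t"] that L by (auto simp: field_simps power_divide)
      then show ?thesis
        unfolding far_def using less_asym by blast
    qed
    ultimately have "(\<lambda>n. measure \<mu> (far (t / L ^ n))) \<longlonglongrightarrow> 0"
      using Lim_measure_decseq[where A="\<lambda>n. far (t / L ^ n)" and M=\<mu>] far_sets emeasure_finite by auto
    then have "measure \<mu> (far t) \<le> 0"
      using far_iterate by (intro LIMSEQ_le_const[where x=0]) auto
    then show ?thesis by (simp add: measure_le_0_iff)
  qed
  have "{x \<in> space \<mu>. x \<notin> A} \<subseteq> (\<Union>n. far (inverse (Suc n)))"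
  proof
    fix x assume "x \<in> {x \<in> space \<mu>. x \<notin> A}"
    then have "0 < infdist x A"
      using infdist_pos_not_in_closed[OF compact_imp_closed[OF A(1)] A(2)] by auto
    then obtain n where "inverse (Suc n) < infdist x A"
      using reals_Archimedean by blast
    then show "x \<in> (\<Union>n. far (inverse (Suc n)))"
      by (auto simp: far_def)
  qed
  moreover have "(\<Union>n. far (inverse (Suc n))) \<in> null_sets \<mu>"
    using far_null far_sets by (intro null_sets_UN) (simp add: null_sets_def emeasure_eq_measure)
  ultimately show ?thesis
    by (rule AE_I'[rotated])
qed

lemma finite_disjoint_compacts_separated:
  fixes K :: "'i \<Rightarrow> 'a::metric_space set"
  assumes "finite W" and "\<And>i. i \<in> W \<Longrightarrow> compact (K i)"
    and "\<And>i j. i \<in> W \<Longrightarrow> j \<in> W \<Longrightarrow> i \<noteq> j \<Longrightarrow> K i \<inter> K j = {}"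
  obtains \<delta> where "0 < \<delta>"
    and "\<And>i j x y. i \<in> W \<Longrightarrow> j \<in> W \<Longrightarrow> i \<noteq> j \<Longrightarrow> x \<in> K i \<Longrightarrow> y \<in> K j \<Longrightarrow> \<delta> \<le> dist x y"
proof -
  define pairs where "pairs = {(i, j). i \<in> W \<and> j \<in> W \<and> i \<noteq> j}"
  have "finite pairs"
    using assms(1) by (auto simp: pairs_def intro: finite_subset[of _ "W \<times> W"])
  moreover have "\<forall>q\<in>pairs. eventually (\<lambda>\<epsilon>. setdist_gt \<epsilon> (K (fst q)) (K (snd q))) (at_right 0)"
    using assms by (auto simp: pairs_def intro!: compact_closed_imp_eventually_setdist_gt_at_right_0 compact_imp_closed)
  ultimately have "eventually (\<lambda>\<epsilon>. \<forall>q\<in>pairs. setdist_gt \<epsilon> (K (fst q)) (K (snd q))) (at_right 0)"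
    by (rule eventually_ball_finite)
  then obtain b :: real where "0 < b" and b: "\<forall>q\<in>pairs. setdist_gt (b / 2) (K (fst q)) (K (snd q))"
    by (auto simp: eventually_at_right_field)
  show ?thesis
  proof
    show "0 < b / 2"
      using \<open>0 < b\<close> by simp
    fix i j x y assume "i \<in> W" "j \<in> W" "i \<noteq> j" "x \<in> K i" "y \<in> K j"
    then have "b / 2 < dist x y"
      using b by (auto simp: pairs_def setdist_gt_def)
    then show "b / 2 \<le> dist x y" by simp
  qed
qed

section \<open>Real-analytic estimates\<close>

lemma powr_neg_convex:
  assumes "0 < e"
  shows "convex_on {0<..} (\<lambda>x::real. x powr - e)"
proof (rule f''_ge0_imp_convex[where f'="\<lambda>x. - e * x powr (- e - 1)" and f''="\<lambda>x. e * (e + 1) * x powr (- e - 2)"])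
  fix x :: real assume x: "x \<in> {0<..}"
  then show "DERIV (\<lambda>x. x powr - e) x :> - e * x powr (- e - 1)"
    by (auto intro!: derivative_eq_intros)
  from x show "DERIV (\<lambda>x. - e * x powr (- e - 1)) x :> e * (e + 1) * x powr (- e - 2)"
    by (auto intro!: derivative_eq_intros simp: algebra_simps)
  show "0 \<le> e * (e + 1) * x powr (- e - 2)"
    using assms by simp
qed simp

text \<open>Jensen's inequality for \<open>x \<mapsto> x powr -(r/k)\<close> with the weights \<open>a i powr (k / (r + k))\<close>.\<close>
lemma powr_neg_le_weighted_sum:
  fixes a x :: "'i \<Rightarrow> real"
  assumes I: "finite I" "I \<noteq> {}" and r: "0 < r" and k: "0 < k"
    and a: "\<And>i. i \<in> I \<Longrightarrow> 0 < a i" and x: "\<And>i. i \<in> I \<Longrightarrow> 0 < x i"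
    and weights: "(\<Sum>i\<in>I. a i powr (k / (r + k))) = 1"
    and n: "(\<Sum>i\<in>I. x i) \<le> n"
  shows "n powr - (r / k) \<le> (\<Sum>i\<in>I. a i * x i powr - (r / k))"
proof -
  define q where "q i = a i powr (k / (r + k))" for i
  have q: "0 < q i" if "i \<in> I" for i
    using a[OF that] by (simp add: q_def)
  have a_eq: "a i = q i powr (1 + r / k)" if "i \<in> I" for i
  proof -
    have "1 + r / k = (r + k) / k"
      using k by (simp add: field_simps)
    then have one: "k / (r + k) * (1 + r / k) = 1"
      using r k by simp
    show ?thesis
      using a[OF that] by (simp only: q_def powr_powr one) simp
  qed
  have "0 < (\<Sum>i\<in>I. x i)"
    using I x by (intro sum_pos) auto
  then have "n powr - (r / k) \<le> (\<Sum>i\<in>I. x i) powr - (r / k)"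
    using n r k by (intro powr_mono2') auto
  also have "(\<Sum>i\<in>I. x i) = (\<Sum>i\<in>I. q i *\<^sub>R (x i / q i))"
  proof (intro sum.cong refl)
    fix i assume "i \<in> I"
    then show "x i = q i *\<^sub>R (x i / q i)"
      using q[OF \<open>i \<in> I\<close>] by simp
  qed
  also have "(\<Sum>i\<in>I. q i *\<^sub>R (x i / q i)) powr - (r / k) \<le> (\<Sum>i\<in>I. q i * (x i / q i) powr - (r / k))"
    using r k q x weights
    by (intro convex_on_sum[OF I powr_neg_convex]) (auto simp: q_def less_imp_le)
  also have "\<dots> = (\<Sum>i\<in>I. a i * x i powr - (r / k))"
  proof (intro sum.cong refl)
    fix i assume "i \<in> I"
    then show "q i * (x i / q i) powr - (r / k) = a i * x i powr - (r / k)"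
      using q[OF \<open>i \<in> I\<close>] x[OF \<open>i \<in> I\<close>] a_eq[OF \<open>i \<in> I\<close>]
      by (simp add: powr_divide powr_add powr_minus field_simps)
  qed
  finally show ?thesis .
qed

lemma liminf_mult_powr_pos:
  fixes q :: "nat \<Rightarrow> real"
  assumes c: "0 < c" and l: "0 < l" "l \<le> k"
    and q: "\<And>n. 1 \<le> n \<Longrightarrow> c * real n powr - (1 / k) \<le> q n"
  shows "0 < liminf (\<lambda>n. ereal (real n * q n powr l))"
proof -
  have "c powr l \<le> real n * q n powr l" if n: "1 \<le> n" for n
  proof -
    have "1 \<le> real n powr (1 - l / k)"
      using n l by (intro ge_one_powr_ge_zero) (auto simp: field_simps)
    then have "c powr l \<le> c powr l * (real n * real n powr - (l / k))"
      using n c by (simp add: powr_diff powr_minus divide_inverse mult_le_cancel_left1)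
    also have "\<dots> = real n * (c * real n powr - (1 / k)) powr l"
      using c by (simp add: powr_mult powr_powr)
    also have "\<dots> \<le> real n * q n powr l"
      using q[OF n] c l by (intro mult_left_mono powr_mono2) auto
    finally show ?thesis .
  qed
  then have "ereal (c powr l) \<le> liminf (\<lambda>n. ereal (real n * q n powr l))"
    by (intro Liminf_bounded eventually_sequentiallyI[of 1]) auto
  then show ?thesis
    by (rule less_le_trans[rotated]) (use c in simp)
qed

lemma liminf_ln_ratio_ge:
  fixes q :: "nat \<Rightarrow> real"
  assumes c: "0 < c" and k: "0 < k"
    and q: "\<And>n. 1 \<le> n \<Longrightarrow> c * real n powr - (1 / k) \<le> q n"
    and q_less_1: "eventually (\<lambda>n. q n < 1) sequentially"
  shows "ereal k \<le> liminf (\<lambda>n. ereal (ln (real n) / - ln (q n)))"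
proof -
  define b where "b n = ln (real n) / (ln (real n) / k - ln c)" for n
  have "filterlim (\<lambda>n. ln (real n)) at_top sequentially"
    by (rule filterlim_compose[OF ln_at_top filterlim_real_sequentially])
  then have inverse_ln: "((\<lambda>n. inverse (ln (real n))) \<longlongrightarrow> 0) sequentially"
    and "\<forall>Z. eventually (\<lambda>n. Z < ln (real n)) sequentially"
    by (simp_all add: tendsto_inverse_0_at_top filterlim_at_top_dense)
  then have ln_large: "eventually (\<lambda>n. max 0 (k * ln c) < ln (real n)) sequentially"
    by blast
  have "((\<lambda>n. k / (1 - k * ln c * inverse (ln (real n)))) \<longlongrightarrow> k / (1 - k * ln c * 0)) sequentially"
    by (intro inverse_ln tendsto_intros) simp
  moreover have "eventually (\<lambda>n. k / (1 - k * ln c * inverse (ln (real n))) = b n) sequentially"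
    using ln_large by eventually_elim (use k in \<open>simp add: b_def field_simps\<close>)
  ultimately have "ereal k = liminf (\<lambda>n. ereal (b n))"
    by (intro lim_imp_Liminf[symmetric] tendsto_ereal) (auto elim: Lim_transform_eventually)
  also have "liminf (\<lambda>n. ereal (b n)) \<le> liminf (\<lambda>n. ereal (ln (real n) / - ln (q n)))"
  proof (intro Liminf_mono)
    show "eventually (\<lambda>n. ereal (b n) \<le> ereal (ln (real n) / - ln (q n))) sequentially"
      using ln_large q_less_1 eventually_ge_at_top[of 1]
    proof eventually_elim
      case (elim n)
      have "0 < c * real n powr - (1 / k)"
        using c elim by simp
      then have "ln (c * real n powr - (1 / k)) \<le> ln (q n)" and "0 < q n"
        using q[OF \<open>1 \<le> n\<close>] by auto
      then have "- ln (q n) \<le> ln (real n) / k - ln c" and "0 < - ln (q n)"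
        using c elim by (simp_all add: ln_mult ln_powr)
      then have "b n \<le> ln (real n) / - ln (q n)"
        unfolding b_def using elim by (intro divide_left_mono mult_pos_pos) auto
      then show ?case
        by simp
    qed
  qed
  finally show ?thesis .
qed

section \<open>Quantization error\<close>

lemma quant_V_le_cover:
  fixes \<mu> :: "'a::real_normed_vector measure"
  assumes "prob_space \<mu>" and "AE x in \<mu>. x \<in> A" and "0 \<le> r"
    and F: "finite F" "F \<noteq> {}" "card F \<le> n"
    and cover: "\<And>x. x \<in> A \<Longrightarrow> \<exists>a\<in>F. norm (x - a) \<le> \<epsilon>"
  shows "quant_V n r \<mu> \<le> ennreal (\<epsilon> powr r)"
proof -
  have "quant_V n r \<mu> \<le> (\<integral>\<^sup>+x. ennreal (Min ((\<lambda>a. norm (x - a) powr r) ` F)) \<partial>\<mu>)"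
    unfolding quant_V_def using F by (intro INF_lower) auto
  also have "\<dots> \<le> (\<integral>\<^sup>+x. ennreal (\<epsilon> powr r) \<partial>\<mu>)"
    using assms(2)
  proof (intro nn_integral_mono_AE, eventually_elim)
    case (elim x)
    then obtain a where "a \<in> F" "norm (x - a) \<le> \<epsilon>"
      using cover by blast
    have "Min ((\<lambda>a. norm (x - a) powr r) ` F) \<le> norm (x - a) powr r"
      using F \<open>a \<in> F\<close> by (intro Min_le) auto
    also have "\<dots> \<le> \<epsilon> powr r"
      using \<open>norm (x - a) \<le> \<epsilon>\<close> \<open>0 \<le> r\<close> by (intro powr_mono2) auto
    finally show ?case
      by (rule ennreal_leI)
  qed
  also have "\<dots> = ennreal (\<epsilon> powr r)"
    using prob_space.emeasure_space_1[OF assms(1)] by simp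
  finally show ?thesis .
qed

lemma quant_V_finite:
  fixes \<mu> :: "'a::real_normed_vector measure"
  assumes "prob_space \<mu>" and "AE x in \<mu>. x \<in> A" and "0 \<le> r"
    and "bounded A" "A \<noteq> {}" "1 \<le> n"
  shows "quant_V n r \<mu> < \<top>"
proof -
  obtain a0 where "a0 \<in> A"
    using \<open>A \<noteq> {}\<close> by blast
  obtain R where "\<And>x. x \<in> A \<Longrightarrow> norm (x - a0) \<le> R"
    using \<open>bounded A\<close> by (auto simp: bounded_any_center[of _ a0] dist_norm norm_minus_commute)
  then have "quant_V n r \<mu> \<le> ennreal (R powr r)"
    using assms by (intro quant_V_le_cover[where F="{a0}"]) auto
  then show ?thesis
    using order.strict_trans1 by fastforce
qed

lemma eventually_quant_e_less_1:
  fixes \<mu> :: "'a::real_normed_vector measure"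
  assumes "prob_space \<mu>" and "AE x in \<mu>. x \<in> A" and "0 < r"
    and "compact A" "A \<noteq> {}"
  shows "eventually (\<lambda>n. quant_e n r \<mu> < 1) sequentially"
proof -
  obtain F where F: "F \<subseteq> A" "finite F" "A \<subseteq> (\<Union>a\<in>F. ball a (1 / 2))"
    using compactE_image[OF \<open>compact A\<close>, of A "\<lambda>a. ball a (1 / 2)"] by force
  have "F \<noteq> {}"
    using F(3) \<open>A \<noteq> {}\<close> by auto
  have "quant_e n r \<mu> \<le> 1 / 2" if "card F \<le> n" for n
  proof -
    have "quant_V n r \<mu> \<le> ennreal ((1 / 2) powr r)"
      using assms F \<open>F \<noteq> {}\<close> that
      by (intro quant_V_le_cover[where F=F]) (force simp: dist_norm norm_minus_commute)+
    then have "enn2real (quant_V n r \<mu>) powr (1 / r) \<le> ((1 / 2) powr r) powr (1 / r)"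
      using \<open>0 < r\<close> by (intro powr_mono2 enn2real_leI) auto
    then show ?thesis
      using \<open>0 < r\<close> by (simp add: quant_e_def powr_powr)
  qed
  then show ?thesis
    by (intro eventually_sequentiallyI[of "card F"]) force
qed

lemma quant_e_ge_of_quant_V_ge:
  assumes "0 < r" "0 < C" and "ennreal (C * real n powr - (r / k)) \<le> quant_V n r \<mu>"
    and "quant_V n r \<mu> < \<top>"
  shows "C powr (1 / r) * real n powr - (1 / k) \<le> quant_e n r \<mu>"
proof -
  have "C * real n powr - (r / k) \<le> enn2real (quant_V n r \<mu>)"
    using enn2real_mono[OF assms(3,4)] \<open>0 < C\<close> by simp
  then have "(C * real n powr - (r / k)) powr (1 / r) \<le> quant_e n r \<mu>"
    unfolding quant_e_def using assms(1,2) by (intro powr_mono2) auto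
  then show ?thesis
    using assms(1,2) by (simp add: powr_mult powr_powr)
qed

section \<open>Lower bound for separated self-similar measures\<close>

locale self_similar_separated =
  fixes \<mu> :: "'a::euclidean_space measure" and W :: "'i set" and g :: "'i \<Rightarrow> 'a \<Rightarrow> 'a"
    and P S :: "'i \<Rightarrow> real" and A :: "'a set" and \<delta> :: real
  assumes prob: "prob_space \<mu>" and sets_\<mu>: "sets \<mu> = sets borel"
    and invariant: "\<And>B. B \<in> sets borel \<Longrightarrow> emeasure \<mu> B = (\<Sum>i\<in>W. ennreal (P i) * emeasure \<mu> (g i -` B))"
    and finite_W: "finite W"
    and P_pos: "\<And>i. i \<in> W \<Longrightarrow> 0 < P i"
    and S_pos: "\<And>i. i \<in> W \<Longrightarrow> 0 < S i" and S_less_1: "\<And>i. i \<in> W \<Longrightarrow> S i < 1"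
    and continuous_g: "\<And>i. i \<in> W \<Longrightarrow> continuous_on UNIV (g i)"
    and dist_g_ge: "\<And>i x y. i \<in> W \<Longrightarrow> S i * dist x y \<le> dist (g i x) (g i y)"
    and compact_A: "compact A" and g_A: "\<And>i. i \<in> W \<Longrightarrow> g i ` A \<subseteq> A"
    and AE_A: "AE x in \<mu>. x \<in> A"
    and \<delta>_pos: "0 < \<delta>"
    and separated: "\<And>i j x y. i \<in> W \<Longrightarrow> j \<in> W \<Longrightarrow> i \<noteq> j \<Longrightarrow> x \<in> A \<Longrightarrow> y \<in> A \<Longrightarrow>
      \<delta> \<le> dist (g i x) (g j y)"
begin

lemma space_\<mu>: "space \<mu> = UNIV"
  using sets_eq_imp_space_eq[OF sets_\<mu>] by simp

lemma A_nonempty: "A \<noteq> {}"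
  using AE_A prob_space.AE_False[OF prob] by force

lemma nn_integral_invariant:
  assumes "u \<in> borel_measurable borel"
  shows "(\<integral>\<^sup>+x. u x \<partial>\<mu>) = (\<Sum>i\<in>W. ennreal (P i) * (\<integral>\<^sup>+x. u (g i x) \<partial>\<mu>))"
proof (rule nn_integral_invariant_sum)
  show "g i \<in> \<mu> \<rightarrow>\<^sub>M \<mu>" if "i \<in> W" for i
    using borel_measurable_continuous_onI[OF continuous_g[OF that]]
    by (simp add: measurable_cong_sets[OF sets_\<mu> sets_\<mu>])
  show "emeasure \<mu> B = (\<Sum>i\<in>W. ennreal (P i) * emeasure \<mu> (g i -` B \<inter> space \<mu>))" if "B \<in> sets \<mu>" for B
    using invariant that by (simp add: sets_\<mu> space_\<mu>)
  show "u \<in> borel_measurable \<mu>"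
    using assms by (simp add: measurable_cong_sets[OF sets_\<mu> refl])
qed

lemma card_W_ge_2:
  assumes r: "0 < r" and k: "0 < k" and weights: "(\<Sum>i\<in>W. (P i * S i powr r) powr (k / (r + k))) = 1"
  shows "2 \<le> card W"
proof (rule ccontr)
  assume "\<not> 2 \<le> card W"
  moreover have "0 < card W"
    using weights finite_W by (auto simp: card_gt_0_iff)
  ultimately have "card W = 1"
    by linarith
  then obtain i where W: "W = {i}"
    by (metis One_nat_def card_1_singleton_iff)
  then have "P i = 1"
    using invariant_weights_sum[OF prob sets_\<mu> invariant] P_pos[of i] by simp
  moreover have "S i powr r < 1"
    using powr_less_mono2[OF r, of "S i" 1] S_pos[of i] S_less_1[of i] W by simp
  ultimately have "(P i * S i powr r) powr (k / (r + k)) < 1"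
    using powr_less_mono2[of "k / (r + k)" "P i * S i powr r" 1] r k by simp
  with W weights show False by simp
qed

text \<open>\<open>G\<close> stands for a composition \<open>g\<^sub>\<tau>\<close> of the maps and \<open>t\<close> for its contraction ratio
  \<open>S\<^sub>\<tau>\<close>; the cylinder \<open>G ` A\<close> is then separated from its neighbours by \<open>\<delta> t\<close>.\<close>
definition admissible :: "('a \<Rightarrow> 'a) \<Rightarrow> real \<Rightarrow> bool" where
  "admissible G t \<longleftrightarrow> continuous_on UNIV G \<and> 0 < t \<and> t \<le> 1 \<and> (\<forall>x y. t * dist x y \<le> dist (G x) (G y))"

definition near_points :: "'a set \<Rightarrow> ('a \<Rightarrow> 'a) \<Rightarrow> real \<Rightarrow> 'a set" where
  "near_points \<alpha> G t = {a\<in>\<alpha>. \<exists>x\<in>A. dist a (G x) < \<delta> * t / 2}"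

definition truncated_cost :: "real \<Rightarrow> 'a set \<Rightarrow> ('a \<Rightarrow> 'a) \<Rightarrow> real \<Rightarrow> ennreal" where
  "truncated_cost r \<alpha> G t = (\<integral>\<^sup>+y. ennreal (min (infdist (G y) \<alpha>) (\<delta> * t / 2) powr r) \<partial>\<mu>)"

definition cost_constant :: "real \<Rightarrow> real" where
  "cost_constant r = Min ((\<lambda>i. P i * S i powr r) ` W) * (\<delta> / 2) powr r"

lemma admissible_id: "admissible id 1"
  by (simp add: admissible_def)

lemma admissible_comp:
  assumes "admissible G t" "i \<in> W"
  shows "admissible (G \<circ> g i) (t * S i)"
proof -
  have "t * S i * dist x y \<le> t * dist (g i x) (g i y)" for x y
    using assms mult_left_mono[OF dist_g_ge[of i x y], of t] by (simp add: admissible_def mult.assoc)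
  also have "\<dots> x y \<le> dist (G (g i x)) (G (g i y))" for x y
    using assms(1) by (simp add: admissible_def)
  finally have "t * S i * dist x y \<le> dist ((G \<circ> g i) x) ((G \<circ> g i) y)" for x y
    by simp
  moreover have "continuous_on UNIV (G \<circ> g i)"
    using assms continuous_on_compose[OF continuous_g continuous_on_subset[of UNIV G]]
    by (simp add: admissible_def)
  ultimately show ?thesis
    using assms S_pos[of i] S_less_1[of i] by (simp add: admissible_def mult_le_one)
qed

lemma admissible_scale_le:
  assumes "admissible G t" "i \<in> W"
  shows "\<delta> * (t * S i) / 2 \<le> \<delta> * t / 2"
  using assms S_less_1[of i] \<delta>_pos by (auto simp: admissible_def intro!: mult_right_le_one_le)

lemma finite_near_points: "finite \<alpha> \<Longrightarrow> finite (near_points \<alpha> G t)"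
  by (simp add: near_points_def)

lemma cost_constant_pos: "0 < cost_constant r"
proof -
  have "W \<noteq> {}"
    using invariant_weights_sum[OF prob sets_\<mu> invariant] by auto
  have "0 < Min ((\<lambda>i. P i * S i powr r) ` W)"
    using finite_W \<open>W \<noteq> {}\<close> by (subst Min_gr_iff) (auto intro!: mult_pos_pos P_pos dest: S_pos)
  then show ?thesis
    using \<delta>_pos by (simp add: cost_constant_def)
qed

lemma cost_constant_le:
  assumes "i \<in> W"
  shows "cost_constant r \<le> P i * S i powr r * (\<delta> / 2) powr r"
  unfolding cost_constant_def using assms finite_W by (intro mult_right_mono Min_le) auto

lemma truncated_cost_children_le:
  assumes "0 \<le> r" "admissible G t"
  shows "(\<Sum>i\<in>W. ennreal (P i) * truncated_cost r \<alpha> (G \<circ> g i) (t * S i)) \<le> truncated_cost r \<alpha> G t"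
proof -
  have [measurable]: "(\<lambda>y. infdist (G y) \<alpha>) \<in> borel_measurable borel"
    using assms(2) unfolding admissible_def by (intro borel_measurable_continuous_onI continuous_intros) auto
  have "(\<lambda>y. ennreal (min (infdist (G y) \<alpha>) (\<delta> * t / 2) powr r)) \<in> borel_measurable borel"
    by measurable
  then have "truncated_cost r \<alpha> G t =
      (\<Sum>i\<in>W. ennreal (P i) * (\<integral>\<^sup>+y. ennreal (min (infdist (G (g i y)) \<alpha>) (\<delta> * t / 2) powr r) \<partial>\<mu>))"
    unfolding truncated_cost_def by (rule nn_integral_invariant)
  moreover have "truncated_cost r \<alpha> (G \<circ> g i) (t * S i) \<le>
      (\<integral>\<^sup>+y. ennreal (min (infdist (G (g i y)) \<alpha>) (\<delta> * t / 2) powr r) \<partial>\<mu>)" if "i \<in> W" for i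
    unfolding truncated_cost_def using admissible_scale_le[OF assms(2) that] assms(1) \<delta>_pos S_pos[OF that] assms(2)
    by (intro nn_integral_mono ennreal_leI powr_mono2 min.mono) (auto simp: admissible_def infdist_nonneg)
  ultimately show ?thesis
    by (auto intro!: sum_mono mult_left_mono)
qed

lemma truncated_cost_ge_of_near_points_empty:
  assumes "0 \<le> r" "finite \<alpha>" "\<alpha> \<noteq> {}" and "near_points \<alpha> G t = {}"
  shows "ennreal ((\<delta> * t / 2) powr r) \<le> truncated_cost r \<alpha> G t"
proof -
  have "ennreal ((\<delta> * t / 2) powr r) = (\<integral>\<^sup>+y. ennreal ((\<delta> * t / 2) powr r) \<partial>\<mu>)"
    using prob_space.emeasure_space_1[OF prob] by simp
  also have "\<dots> \<le> truncated_cost r \<alpha> G t"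
    unfolding truncated_cost_def using AE_A
  proof (intro nn_integral_mono_AE, eventually_elim)
    case (elim y)
    obtain a where a: "a \<in> \<alpha>" "infdist (G y) \<alpha> = dist (G y) a"
      using infdist_attains_inf[OF finite_imp_closed] assms(2,3) by metis
    then have "\<not> dist a (G y) < \<delta> * t / 2"
      using assms(4) elim by (auto simp: near_points_def)
    then have "\<delta> * t / 2 \<le> infdist (G y) \<alpha>"
      using a(2) by (simp add: dist_commute)
    then show ?case by simp
  qed
  finally show ?thesis .
qed

text \<open>A point of \<open>\<alpha>\<close> can be near at most one of the subcylinders, by the separation of the maps.\<close>
lemma sum_card_near_points_le:
  assumes "finite \<alpha>" "admissible G t"
  shows "(\<Sum>i\<in>W. card (near_points \<alpha> (G \<circ> g i) (t * S i))) \<le> card (near_points \<alpha> G t)"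
proof -
  have sub: "near_points \<alpha> (G \<circ> g i) (t * S i) \<subseteq> near_points \<alpha> G t" if "i \<in> W" for i
  proof
    fix a assume "a \<in> near_points \<alpha> (G \<circ> g i) (t * S i)"
    then obtain x where "a \<in> \<alpha>" "x \<in> A" "dist a (G (g i x)) < \<delta> * (t * S i) / 2"
      by (auto simp: near_points_def)
    then show "a \<in> near_points \<alpha> G t"
      using admissible_scale_le[OF assms(2) that] g_A[OF that]
      unfolding near_points_def by (intro CollectI conjI bexI[of _ "g i x"]) auto
  qed
  have disj: "near_points \<alpha> (G \<circ> g i) (t * S i) \<inter> near_points \<alpha> (G \<circ> g j) (t * S j) = {}"
    if ij: "i \<in> W" "j \<in> W" "i \<noteq> j" for i j
  proof (rule ccontr)
    assume "near_points \<alpha> (G \<circ> g i) (t * S i) \<inter> near_points \<alpha> (G \<circ> g j) (t * S j) \<noteq> {}"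
    then obtain a x y where "x \<in> A" "y \<in> A"
      and "dist a (G (g i x)) < \<delta> * (t * S i) / 2" "dist a (G (g j y)) < \<delta> * (t * S j) / 2"
      by (auto simp: near_points_def)
    then have "dist (G (g i x)) (G (g j y)) < \<delta> * t"
      using dist_triangle3[of "G (g i x)" "G (g j y)" a]
        admissible_scale_le[OF assms(2) ij(1)] admissible_scale_le[OF assms(2) ij(2)] by linarith
    moreover have "\<delta> * t \<le> t * dist (g i x) (g j y)"
      using separated[OF ij \<open>x \<in> A\<close> \<open>y \<in> A\<close>] assms(2) by (simp add: admissible_def mult.commute)
    moreover have "t * dist (g i x) (g j y) \<le> dist (G (g i x)) (G (g j y))"
      using assms(2) by (simp add: admissible_def)
    ultimately show False
      by linarith
  qed
  have "(\<Sum>i\<in>W. card (near_points \<alpha> (G \<circ> g i) (t * S i))) =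
      card (\<Union>i\<in>W. near_points \<alpha> (G \<circ> g i) (t * S i))"
    using finite_W assms(1) disj by (intro card_UN_disjoint[symmetric]) (auto simp: finite_near_points)
  also have "\<dots> \<le> card (near_points \<alpha> G t)"
    using sub assms(1) by (intro card_mono finite_near_points) auto
  finally show ?thesis .
qed

lemma truncated_cost_ge_of_empty_child:
  assumes "0 \<le> r" "finite \<alpha>" "\<alpha> \<noteq> {}" "admissible G t"
    and j: "j \<in> W" "near_points \<alpha> (G \<circ> g j) (t * S j) = {}"
  shows "ennreal (t powr r * cost_constant r) \<le> truncated_cost r \<alpha> G t"
proof -
  have "t powr r * cost_constant r \<le> t powr r * (P j * S j powr r * (\<delta> / 2) powr r)"
    using cost_constant_le[OF j(1)] by (intro mult_left_mono) auto
  also have "\<dots> = P j * (\<delta> * (t * S j) / 2) powr r"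
    using powr_mult[of t "S j * (\<delta> / 2)" r] powr_mult[of "S j" "\<delta> / 2" r]
      assms(4) S_pos[OF j(1)] \<delta>_pos by (simp add: admissible_def mult_ac)
  finally have "ennreal (t powr r * cost_constant r) \<le> ennreal (P j) * ennreal ((\<delta> * (t * S j) / 2) powr r)"
    using P_pos[OF j(1)] by (simp add: ennreal_mult'[symmetric] ennreal_leI)
  also have "\<dots> \<le> ennreal (P j) * truncated_cost r \<alpha> (G \<circ> g j) (t * S j)"
    using truncated_cost_ge_of_near_points_empty[OF assms(1-3) j(2)] by (rule mult_left_mono) simp
  also have "\<dots> \<le> (\<Sum>i\<in>W. ennreal (P i) * truncated_cost r \<alpha> (G \<circ> g i) (t * S i))"
    using j(1) finite_W by (intro member_le_sum) auto
  also have "\<dots> \<le> truncated_cost r \<alpha> G t"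
    using assms(1,4) by (rule truncated_cost_children_le)
  finally show ?thesis .
qed

lemma truncated_cost_ge_of_children:
  assumes r: "0 < r" and k: "0 < k" and weights: "(\<Sum>i\<in>W. (P i * S i powr r) powr (k / (r + k))) = 1"
    and G: "admissible G t" and x: "\<And>i. i \<in> W \<Longrightarrow> 0 < x i" and n: "(\<Sum>i\<in>W. x i) \<le> n"
    and children: "\<And>i. i \<in> W \<Longrightarrow> ennreal ((t * S i) powr r * cost_constant r * x i powr - (r / k))
      \<le> truncated_cost r \<alpha> (G \<circ> g i) (t * S i)"
  shows "ennreal (t powr r * cost_constant r * n powr - (r / k)) \<le> truncated_cost r \<alpha> G t"
proof -
  define X where "X i = (t * S i) powr r * cost_constant r * x i powr - (r / k)" for i
  have "W \<noteq> {}"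
    using card_W_ge_2[OF r k weights] by auto
  then have "n powr - (r / k) \<le> (\<Sum>i\<in>W. P i * S i powr r * x i powr - (r / k))"
    using weights x n P_pos S_pos
    by (intro powr_neg_le_weighted_sum[OF finite_W _ r k]) (auto intro!: mult_pos_pos dest: S_pos)
  then have "t powr r * cost_constant r * n powr - (r / k)
      \<le> t powr r * cost_constant r * (\<Sum>i\<in>W. P i * S i powr r * x i powr - (r / k))"
    using cost_constant_pos[of r] by (simp add: mult_left_mono)
  also have "\<dots> = (\<Sum>i\<in>W. P i * X i)"
    unfolding sum_distrib_left X_def using G
    by (intro sum.cong refl) (simp add: admissible_def powr_mult S_pos[THEN less_imp_le] mult_ac)
  finally have "ennreal (t powr r * cost_constant r * n powr - (r / k)) \<le> ennreal (\<Sum>i\<in>W. P i * X i)"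
    by (rule ennreal_leI)
  also have "\<dots> = (\<Sum>i\<in>W. ennreal (P i) * ennreal (X i))"
    using P_pos[THEN less_imp_le] cost_constant_pos[of r]
    by (subst sum_ennreal[symmetric]) (simp_all add: X_def ennreal_mult')
  also have "\<dots> \<le> (\<Sum>i\<in>W. ennreal (P i) * truncated_cost r \<alpha> (G \<circ> g i) (t * S i))"
    using children by (intro sum_mono mult_left_mono) (auto simp: X_def)
  also have "\<dots> \<le> truncated_cost r \<alpha> G t"
    using r G by (intro truncated_cost_children_le) auto
  finally show ?thesis .
qed

text \<open>Induction on the number of points of \<open>\<alpha>\<close> near the cylinder: either some subcylinder
  carries none and alone contributes enough, or the points are shared among all subcylinders,
  each carrying fewer, and Jensen's inequality recombines their bounds.\<close>
lemma truncated_cost_lower_bound: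
  assumes r: "0 < r" and k: "0 < k" and weights: "(\<Sum>i\<in>W. (P i * S i powr r) powr (k / (r + k))) = 1"
    and \<alpha>: "finite \<alpha>" "\<alpha> \<noteq> {}"
  shows "admissible G t \<Longrightarrow> 1 \<le> n \<Longrightarrow> card (near_points \<alpha> G t) \<le> n \<Longrightarrow>
    ennreal (t powr r * cost_constant r * real n powr - (r / k)) \<le> truncated_cost r \<alpha> G t"
proof (induction n arbitrary: G t rule: less_induct)
  case (less n)
  define m where "m i = card (near_points \<alpha> (G \<circ> g i) (t * S i))" for i
  show ?case
  proof (cases "\<exists>j\<in>W. m j = 0")
    case True
    then obtain j where "j \<in> W" "near_points \<alpha> (G \<circ> g j) (t * S j) = {}"
      using finite_near_points[OF \<alpha>(1)] by (auto simp: m_def)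
    then have "ennreal (t powr r * cost_constant r) \<le> truncated_cost r \<alpha> G t"
      using truncated_cost_ge_of_empty_child r \<alpha> less.prems(1) by simp
    moreover have "real n powr - (r / k) \<le> 1"
      using less.prems(2) r k by (simp add: powr_minus_divide ge_one_powr_ge_zero)
    ultimately show ?thesis
      using less.prems(1) cost_constant_pos[of r]
      by (elim order_trans[rotated]) (simp add: admissible_def ennreal_leI mult_left_le)
  next
    case False
    then have m_pos: "1 \<le> m i" if "i \<in> W" for i
      using that by (simp add: Suc_le_eq)
    have sum_m: "(\<Sum>i\<in>W. m i) \<le> n"
      using sum_card_near_points_le[OF \<alpha>(1) less.prems(1)] less.prems(3) by (simp add: m_def)
    have m_less: "m i < n" if "i \<in> W" for i
    proof -
      have "\<not> W \<subseteq> {i}"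
        using card_W_ge_2[OF r k weights] card_mono[of "{i}" W] by auto
      then obtain j where "j \<in> W - {i}"
        by auto
      then have "1 \<le> (\<Sum>l\<in>W - {i}. m l)"
        using m_pos finite_W by (intro order_trans[OF _ member_le_sum[of j]]) auto
      then show ?thesis
        using sum_m sum.remove[OF finite_W that, of m] by linarith
    qed
    show ?thesis
    proof (rule truncated_cost_ge_of_children[OF r k weights less.prems(1)])
      show "0 < real (m i)" if "i \<in> W" for i
        using m_pos[OF that] by simp
      show "(\<Sum>i\<in>W. real (m i)) \<le> real n"
        using sum_m by (metis of_nat_le_iff of_nat_sum)
      show "ennreal ((t * S i) powr r * cost_constant r * real (m i) powr - (r / k))
          \<le> truncated_cost r \<alpha> (G \<circ> g i) (t * S i)" if "i \<in> W" for i
        using less.IH[OF m_less[OF that] admissible_comp[OF less.prems(1) that] m_pos[OF that]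
            eq_refl[OF m_def[symmetric]]] .
    qed
  qed
qed

lemma quant_V_lower_bound:
  assumes r: "0 < r" and k: "0 < k" and weights: "(\<Sum>i\<in>W. (P i * S i powr r) powr (k / (r + k))) = 1"
    and n: "1 \<le> n"
  shows "ennreal (cost_constant r * real n powr - (r / k)) \<le> quant_V n r \<mu>"
  unfolding quant_V_def
proof (rule INF_greatest, clarify)
  fix \<alpha> :: "'a set" assume \<alpha>: "finite \<alpha>" "\<alpha> \<noteq> {}" "card \<alpha> \<le> n"
  have "real n powr - (r / k) \<le> real (card \<alpha>) powr - (r / k)"
    using \<alpha> r k by (intro powr_mono2') (auto simp: Suc_le_eq card_gt_0_iff)
  then have "ennreal (cost_constant r * real n powr - (r / k))
      \<le> ennreal (1 powr r * cost_constant r * real (card \<alpha>) powr - (r / k))"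
    using cost_constant_pos by (intro ennreal_leI) simp
  also have "\<dots> \<le> truncated_cost r \<alpha> id 1"
    using \<alpha> by (intro truncated_cost_lower_bound[OF r k weights] admissible_id) (auto simp: Suc_le_eq card_gt_0_iff near_points_def intro: card_mono)
  also have "\<dots> \<le> (\<integral>\<^sup>+x. ennreal (Min ((\<lambda>a. norm (x - a) powr r) ` \<alpha>)) \<partial>\<mu>)"
    unfolding truncated_cost_def
  proof (intro nn_integral_mono ennreal_leI)
    fix x
    have "min (infdist x \<alpha>) (\<delta> * 1 / 2) powr r \<le> infdist x \<alpha> powr r"
      using r \<delta>_pos by (intro powr_mono2) (auto simp: infdist_nonneg)
    also have "\<dots> \<le> Min ((\<lambda>a. norm (x - a) powr r) ` \<alpha>)"
      using \<alpha> r by (intro Min.boundedI) (auto intro!: powr_mono2 simp: infdist_nonneg infdist_le dist_norm[symmetric])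
    finally show "min (infdist (id x) \<alpha>) (\<delta> * 1 / 2) powr r \<le> Min ((\<lambda>a. norm (x - a) powr r) ` \<alpha>)"
      by simp
  qed
  finally show "ennreal (cost_constant r * real n powr - (r / k))
      \<le> (\<integral>\<^sup>+x. ennreal (Min ((\<lambda>a. norm (x - a) powr r) ` \<alpha>)) \<partial>\<mu>)" .
qed

theorem quantization_lower_bounds:
  assumes r: "0 < r" and k: "0 < k" and weights: "(\<Sum>i\<in>W. (P i * S i powr r) powr (k / (r + k))) = 1"
  shows "(\<forall>l. 0 < l \<and> l < k \<longrightarrow> 0 < liminf (\<lambda>n. ereal (real n * quant_e n r \<mu> powr l)))
    \<and> ereal k \<le> lower_quant_dim r \<mu>"
proof -
  define c where "c = cost_constant r powr (1 / r)"
  have "c * real n powr - (1 / k) \<le> quant_e n r \<mu>" if "1 \<le> n" for n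
    unfolding c_def using r cost_constant_pos[of r] quant_V_lower_bound[OF r k weights that]
      quant_V_finite[OF prob AE_A _ compact_imp_bounded[OF compact_A] A_nonempty that]
    by (intro quant_e_ge_of_quant_V_ge) auto
  moreover have "eventually (\<lambda>n. quant_e n r \<mu> < 1) sequentially"
    using eventually_quant_e_less_1[OF prob AE_A r compact_A A_nonempty] .
  moreover have "0 < c"
    using cost_constant_pos[of r] by (simp add: c_def)
  ultimately show ?thesis
    unfolding lower_quant_dim_def
    using liminf_mult_powr_pos[of c _ k "\<lambda>n. quant_e n r \<mu>"] liminf_ln_ratio_ge[of c k] k
    by (auto intro: less_imp_le)
qed

end

section \<open>Iterated function systems with the strong open set condition\<close>

locale sosc_ifs =
  fixes N :: nat and f :: "nat \<Rightarrow> 'a::euclidean_space \<Rightarrow> 'a" and s c :: "nat \<Rightarrow> real"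
    and A U :: "'a set"
  assumes ratios: "\<And>i. i \<in> {1..N} \<Longrightarrow> 0 < s i \<and> s i \<le> c i \<and> c i < 1"
    and bilipschitz: "\<And>i x y. i \<in> {1..N} \<Longrightarrow>
      s i * norm (x - y) \<le> norm (f i x - f i y) \<and> norm (f i x - f i y) \<le> c i * norm (x - y)"
    and attractor: "is_attractor {1..N} f A"
    and sosc: "SOSC_with {1..N} f A U"
begin

lemma ratios_pos: "i \<in> {1..N} \<Longrightarrow> 0 < s i" "i \<in> {1..N} \<Longrightarrow> 0 < c i"
  using ratios[of i] by auto

lemma word_prod_bounds:
  assumes "set u \<subseteq> {1..N}"
  shows "0 < word_prod s u" "0 < word_prod c u"
    and "u \<noteq> [] \<Longrightarrow> word_prod s u < 1" "u \<noteq> [] \<Longrightarrow> word_prod c u < 1"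
proof -
  have "0 < s i \<and> s i < 1" "0 < c i \<and> c i < 1" if "i \<in> set u" for i
    using ratios[of i] assms that by auto
  then show "0 < word_prod s u" "0 < word_prod c u"
    and "u \<noteq> [] \<Longrightarrow> word_prod s u < 1" "u \<noteq> [] \<Longrightarrow> word_prod c u < 1"
    by (simp_all add: word_prod_pos word_prod_less_1)
qed

lemma dist_word_map_bounds:
  assumes "set u \<subseteq> {1..N}"
  shows "word_prod s u * dist x y \<le> dist (word_map f u x) (word_map f u y)"
    and "dist (word_map f u x) (word_map f u y) \<le> word_prod c u * dist x y"
proof -
  have "s i * dist x y \<le> dist (f i x) (f i y)" "dist (f i x) (f i y) \<le> c i * dist x y"
    "0 \<le> s i" "0 \<le> c i" if "i \<in> set u" for i x y
    using bilipschitz[of i x y] ratios_pos[of i] assms that by (auto simp: dist_norm)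
  then show "word_prod s u * dist x y \<le> dist (word_map f u x) (word_map f u y)"
    and "dist (word_map f u x) (word_map f u y) \<le> word_prod c u * dist x y"
    by (simp_all add: dist_word_map_ge dist_word_map_le)
qed

lemma continuous_on_word_map:
  assumes "set u \<subseteq> {1..N}"
  shows "continuous_on UNIV (word_map f u)"
proof (rule lipschitz_on_continuous_on)
  show "(word_prod c u)-lipschitz_on UNIV (word_map f u)"
    using dist_word_map_bounds(2)[OF assms] word_prod_bounds(2)[OF assms]
    by (intro lipschitz_onI) auto
qed

lemma word_map_A: "set u \<subseteq> {1..N} \<Longrightarrow> word_map f u ` A \<subseteq> A"
  using attractor by (intro word_map_image_subset) (auto simp: is_attractor_def)

lemma word_map_U_disjoint:
  assumes "set u \<subseteq> {1..N}" "set v \<subseteq> {1..N}" "length u = length v" "u \<noteq> v"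
  shows "word_map f u ` U \<inter> word_map f v ` U = {}"
proof (rule word_map_images_disjoint[OF _ _ _ assms])
  show "inj (f i)" if "i \<in> {1..N}" for i
  proof (rule injI)
    fix x y assume "f i x = f i y"
    then have "s i * norm (x - y) \<le> 0"
      using bilipschitz[OF that, of x y] by simp
    then show "x = y"
      using ratios_pos(1)[OF that] by (simp add: mult_le_0_iff)
  qed
qed (use sosc in \<open>auto simp: SOSC_with_def\<close>)

context
  fixes \<sigma> :: "nat list" and m :: nat
  assumes \<sigma>: "set \<sigma> \<subseteq> {1..N}" "word_map f \<sigma> ` A \<subseteq> U" and m: "1 \<le> m"
begin

lemma words_append_\<sigma>:
  assumes "w \<in> words N m"
  shows "set (w @ \<sigma>) \<subseteq> {1..N}" "w @ \<sigma> \<noteq> []"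
  using assms \<sigma> m by (auto simp: words_def)

lemma words_images_separated:
  obtains \<delta> where "0 < \<delta>"
    and "\<And>w w' x y. w \<in> words N m \<Longrightarrow> w' \<in> words N m \<Longrightarrow> w \<noteq> w' \<Longrightarrow> x \<in> A \<Longrightarrow> y \<in> A \<Longrightarrow>
      \<delta> \<le> dist (word_map f (w @ \<sigma>) x) (word_map f (w' @ \<sigma>) y)"
proof (rule finite_disjoint_compacts_separated[OF finite_words, where K="\<lambda>w. word_map f (w @ \<sigma>) ` A"])
  show "compact (word_map f (w @ \<sigma>) ` A)" if "w \<in> words N m" for w
    using attractor continuous_on_word_map[OF words_append_\<sigma>(1)[OF that]]
    by (intro compact_continuous_image) (auto simp: is_attractor_def intro: continuous_on_subset)
  show "word_map f (w @ \<sigma>) ` A \<inter> word_map f (w' @ \<sigma>) ` A = {}"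
    if "w \<in> words N m" "w' \<in> words N m" "w \<noteq> w'" for w w'
  proof -
    have "word_map f (u @ \<sigma>) ` A \<subseteq> word_map f u ` U" for u
      using \<sigma>(2) by (auto simp: word_map_append)
    moreover have "word_map f w ` U \<inter> word_map f w' ` U = {}"
      using that by (intro word_map_U_disjoint) (auto simp: words_def)
    ultimately show ?thesis
      by blast
  qed
qed (use that in blast)

lemma AE_A_of_invariant_measure:
  assumes "is_invariant_measure (words N m) (\<lambda>w. word_map f w \<circ> word_map f \<sigma>) (word_prod p) \<mu>"
  shows "AE x in \<mu>. x \<in> A"
proof -
  have prob: "prob_space \<mu>" and sets: "sets \<mu> = sets borel"
    and invariant: "\<And>B. B \<in> sets borel \<Longrightarrow> emeasure \<mu> B =
      (\<Sum>w\<in>words N m. ennreal (word_prod p w) * emeasure \<mu> (word_map f (w @ \<sigma>) -` B))"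
    using assms by (simp_all add: is_invariant_measure_def word_map_append)
  define L where "L = Max ((\<lambda>w. word_prod c (w @ \<sigma>)) ` words N m)"
  have "words N m \<noteq> {}"
    using invariant_weights_sum[OF prob sets invariant] by force
  then obtain w0 where "w0 \<in> words N m"
    by blast
  have L_ge: "word_prod c (w @ \<sigma>) \<le> L" if "w \<in> words N m" for w
    unfolding L_def using finite_words that by (intro Max_ge) auto
  have "L \<in> (\<lambda>w. word_prod c (w @ \<sigma>)) ` words N m"
    unfolding L_def using finite_words \<open>words N m \<noteq> {}\<close> by (intro Max_in) auto
  then have L: "0 < L" "L < 1"
    using word_prod_bounds(2)[OF words_append_\<sigma>(1)[OF \<open>w0 \<in> words N m\<close>]] L_ge[OF \<open>w0 \<in> words N m\<close>]
      word_prod_bounds(4)[OF words_append_\<sigma>] by auto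
  have "dist (word_map f (w @ \<sigma>) x) (word_map f (w @ \<sigma>) y) \<le> L * dist x y" if "w \<in> words N m" for w x y
    using dist_word_map_bounds(2)[OF words_append_\<sigma>(1)[OF that]] L_ge[OF that]
    by (meson mult_right_mono order_trans zero_le_dist)
  moreover have "compact A" "A \<noteq> {}"
    using attractor by (simp_all add: is_attractor_def)
  ultimately show ?thesis
    using AE_in_invariant_compact[OF prob sets invariant] L word_map_A[OF words_append_\<sigma>(1)] by blast
qed

theorem self_similar_separated_words:
  assumes p: "\<And>i. i \<in> {1..N} \<Longrightarrow> 0 < p i"
    and \<mu>: "is_invariant_measure (words N m) (\<lambda>w. word_map f w \<circ> word_map f \<sigma>) (word_prod p) \<mu>"
  shows "\<exists>\<delta>. self_similar_separated \<mu> (words N m) (\<lambda>w. word_map f w \<circ> word_map f \<sigma>) (word_prod p)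
    (\<lambda>w. word_prod s w * word_prod s \<sigma>) A \<delta>"
proof -
  obtain \<delta> where \<delta>: "0 < \<delta>" and separated: "\<And>w w' x y. w \<in> words N m \<Longrightarrow> w' \<in> words N m \<Longrightarrow>
      w \<noteq> w' \<Longrightarrow> x \<in> A \<Longrightarrow> y \<in> A \<Longrightarrow> \<delta> \<le> dist (word_map f (w @ \<sigma>) x) (word_map f (w' @ \<sigma>) y)"
    using words_images_separated by blast
  have "self_similar_separated \<mu> (words N m) (\<lambda>w. word_map f (w @ \<sigma>)) (word_prod p)
    (\<lambda>w. word_prod s (w @ \<sigma>)) A \<delta>"
  proof (rule self_similar_separated.intro)
    show "prob_space \<mu>" "sets \<mu> = sets borel"
      "\<And>B. B \<in> sets borel \<Longrightarrow> emeasure \<mu> B =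
        (\<Sum>w\<in>words N m. ennreal (word_prod p w) * emeasure \<mu> (word_map f (w @ \<sigma>) -` B))"
      using \<mu> by (simp_all add: is_invariant_measure_def word_map_append)
    show "AE x in \<mu>. x \<in> A"
      using \<mu> by (rule AE_A_of_invariant_measure)
    show "compact A"
      using attractor by (simp add: is_attractor_def)
    show "finite (words N m)" "0 < \<delta>"
      by (fact finite_words \<delta>)+
    fix w assume w: "w \<in> words N m"
    show "0 < word_prod p w"
      using w p by (intro word_prod_pos) (auto simp: words_def)
    show "0 < word_prod s (w @ \<sigma>)" "word_prod s (w @ \<sigma>) < 1"
      using word_prod_bounds(1,3)[OF words_append_\<sigma>(1)[OF w]] words_append_\<sigma>(2)[OF w] by simp_all
    show "continuous_on UNIV (word_map f (w @ \<sigma>))" "word_map f (w @ \<sigma>) ` A \<subseteq> A"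
      "\<And>x y. word_prod s (w @ \<sigma>) * dist x y \<le> dist (word_map f (w @ \<sigma>) x) (word_map f (w @ \<sigma>) y)"
      using words_append_\<sigma>(1)[OF w] by (simp_all add: continuous_on_word_map word_map_A dist_word_map_bounds(1))
    show "\<And>w' x y. w' \<in> words N m \<Longrightarrow> w \<noteq> w' \<Longrightarrow> x \<in> A \<Longrightarrow> y \<in> A \<Longrightarrow>
        \<delta> \<le> dist (word_map f (w @ \<sigma>) x) (word_map f (w' @ \<sigma>) y)"
      using separated[OF w] by blast
  qed
  then show ?thesis
    by (auto simp: word_map_append word_prod_append)
qed

end

end

theorem mainTheorem19:
  fixes N m :: nat
    and f :: "nat \<Rightarrow> 'a::euclidean_space \<Rightarrow> 'a"
    and p s c :: "nat \<Rightarrow> real"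
    and A U :: "'a set"
    and \<sigma> :: "nat list"
    and \<mu> :: "'a measure"
    and r k :: real
  assumes p_pos: "\<forall>i\<in>{1..N}. p i > 0"
    and p_sum: "(\<Sum>i\<in>{1..N}. p i) = 1"
    and sc: "\<forall>i\<in>{1..N}. 0 < s i \<and> s i \<le> c i \<and> c i < 1"
    and bilip: "\<forall>i\<in>{1..N}. \<forall>x y. s i * norm (x - y) \<le> norm (f i x - f i y)
                    \<and> norm (f i x - f i y) \<le> c i * norm (x - y)"
    and attr: "is_attractor {1..N} f A"
    and sosc: "SOSC_with {1..N} f A U"
    and \<sigma>_word: "set \<sigma> \<subseteq> {1..N}"
    and \<sigma>_U: "word_map f \<sigma> ` A \<subseteq> U"
    and m_pos: "m \<ge> 1"
    and inv: "is_invariant_measure (words N m) (\<lambda>w. word_map f w \<circ> word_map f \<sigma>)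
                 (word_prod p) \<mu>"
    and r_pos: "r > 0"
    and k_pos: "k > 0"
    and k_eq: "(\<Sum>w\<in>words N m. (word_prod p w * (word_prod s w * word_prod s \<sigma>) powr r)
                   powr (k / (r + k))) = 1"
  shows "(\<forall>l0. 0 < l0 \<and> l0 < k \<longrightarrow>
            liminf (\<lambda>n. ereal (real n * quant_e n r \<mu> powr l0)) > 0)
         \<and> ereal k \<le> lower_quant_dim r \<mu>"
proof -
  interpret sosc_ifs N f s c A U
    using sc bilip attr sosc by unfold_locales auto
  obtain \<delta> where "self_similar_separated \<mu> (words N m) (\<lambda>w. word_map f w \<circ> word_map f \<sigma>) (word_prod p)
      (\<lambda>w. word_prod s w * word_prod s \<sigma>) A \<delta>"
    using self_similar_separated_words[OF \<sigma>_word \<sigma>_U m_pos _ inv] p_pos by blast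
  then show ?thesis
    using self_similar_separated.quantization_lower_bounds[OF _ r_pos k_pos k_eq] by blast
qed

end
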